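(* The line graph of the Petersen graph is vertex-transitive but not uniformly vertex-transitive.
   Context: The Petersen graph has as vertices the $2$-element subsets of $\{1,2,3,4,5\}$, adjacent iff disjoint. The line graph $L(\Gamma)$ has vertex set $E(\Gamma)$, two edges adjacent iff they share an endpoint. A permutation $\sigma$ of the vertex set is identified with its permutation matrix (the $(u,v)$ entry is $1$ iff $\sigma(u)=v$); $J_n$ is the $n\times n$ all-ones matrix. A graph on $n$ vertices is uniformly vertex-transitive if there is a set of $n$ distinct automorphisms $\{\sigma_1,\ldots,\sigma_n\}$ with $\sum_i\sigma_i=J_n$. *)

theory Defs
  imports Main
begin

definition petersen_vertices :: "nat set set" where
  "petersen_vertices = {A. A \<subseteq> {1..5} \<and> card A = 2}"

definition petersen_adj :: "nat set \<Rightarrow> nat set \<Rightarrow> bool" where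
  "petersen_adj A B \<longleftrightarrow> A \<in> petersen_vertices \<and> B \<in> petersen_vertices \<and> A \<inter> B = {}"

definition graph_edges :: "'a set \<Rightarrow> ('a \<Rightarrow> 'a \<Rightarrow> bool) \<Rightarrow> 'a set set" where
  "graph_edges V adj = {{u, v} | u v. u \<in> V \<and> v \<in> V \<and> adj u v}"

definition line_graph_adj :: "'a set \<Rightarrow> ('a \<Rightarrow> 'a \<Rightarrow> bool) \<Rightarrow> 'a set \<Rightarrow> 'a set \<Rightarrow> bool" where
  "line_graph_adj V adj e f \<longleftrightarrow> e \<in> graph_edges V adj \<and> f \<in> graph_edges V adj \<and> e \<noteq> f \<and> e \<inter> f \<noteq> {}"

definition graph_aut :: "'a set \<Rightarrow> ('a \<Rightarrow> 'a \<Rightarrow> bool) \<Rightarrow> ('a \<Rightarrow> 'a) \<Rightarrow> bool" where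
  "graph_aut V adj \<sigma> \<longleftrightarrow> bij_betw \<sigma> V V \<and> (\<forall>x. x \<notin> V \<longrightarrow> \<sigma> x = x)
     \<and> (\<forall>u\<in>V. \<forall>v\<in>V. adj (\<sigma> u) (\<sigma> v) \<longleftrightarrow> adj u v)"

definition vertex_transitive :: "'a set \<Rightarrow> ('a \<Rightarrow> 'a \<Rightarrow> bool) \<Rightarrow> bool" where
  "vertex_transitive V adj \<longleftrightarrow> (\<forall>u\<in>V. \<forall>v\<in>V. \<exists>\<sigma>. graph_aut V adj \<sigma> \<and> \<sigma> u = v)"

text \<open>Uniformly vertex-transitive: n = |V| distinct automorphisms whose permutation matrices
  (entry (u,v) is 1 iff sigma u = v) sum to the all-ones matrix J_n.\<close>
definition uniformly_vertex_transitive :: "'a set \<Rightarrow> ('a \<Rightarrow> 'a \<Rightarrow> bool) \<Rightarrow> bool" where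
  "uniformly_vertex_transitive V adj \<longleftrightarrow>
     (\<exists>S. finite S \<and> card S = card V \<and> (\<forall>\<sigma>\<in>S. graph_aut V adj \<sigma>) \<and>
        (\<forall>u\<in>V. \<forall>v\<in>V. (\<Sum>\<sigma>\<in>S. (if \<sigma> u = v then 1 else 0)) = (1::nat)))"

definition petersen_line_vertices :: "nat set set set" where
  "petersen_line_vertices = graph_edges petersen_vertices petersen_adj"

definition petersen_line_adj :: "nat set set \<Rightarrow> nat set set \<Rightarrow> bool" where
  "petersen_line_adj = line_graph_adj petersen_vertices petersen_adj"

end

theory Submission
  imports Defs
begin

text \<open>Every automorphism of a graph induces one of its line graph. The Petersen graph is the
  Kneser graph K(5,2), on whose edges the symmetric group on {1..5} acts transitively; hence
  its line graph is vertex-transitive.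

  Since the Petersen graph has no triangles, the triangles of its line graph are exactly the
  ten stars T(c) of the three edges through a vertex c, so every automorphism permutes the
  stars. If 15 automorphisms \<sigma> had permutation matrices summing to J, then counting the
  pairs (e, f) in T(a) \<times> T(b) with \<sigma> e = f shows that X(c), the number of \<sigma> with
  \<sigma>(T(a)) = T(c), satisfies 3 X(b) + (sum of X(c) over the neighbours c of b) = 9 for every
  vertex b. The unique solution of this system is X = 3/2, which is not integral.\<close>

section \<open>Automorphisms of graphs and of their line graphs\<close>

lemma graph_aut_comp:
  assumes "graph_aut V adj \<sigma>" "graph_aut V adj \<tau>"
  shows "graph_aut V adj (\<sigma> \<circ> \<tau>)"
proof -
  have "\<tau> u \<in> V" if "u \<in> V" for u
    using assms(2) that unfolding graph_aut_def by (meson bij_betwE)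
  then show ?thesis
    using assms unfolding graph_aut_def by (auto intro: bij_betw_trans)
qed

lemma graph_aut_inv:
  assumes aut: "graph_aut V adj \<sigma>"
  shows "graph_aut V adj (\<lambda>x. if x \<in> V then inv_into V \<sigma> x else x)"
proof -
  have bij: "bij_betw \<sigma> V V" using aut by (simp add: graph_aut_def)
  have "bij_betw (\<lambda>x. if x \<in> V then inv_into V \<sigma> x else x) V V"
    by (rule bij_betw_cong[THEN iffD1, OF _ bij_betw_inv_into[OF bij]]) simp
  moreover have "adj (inv_into V \<sigma> u) (inv_into V \<sigma> v) \<longleftrightarrow> adj u v" if "u \<in> V" "v \<in> V" for u v
  proof -
    have "u \<in> \<sigma> ` V" "v \<in> \<sigma> ` V" using bij that by (simp_all add: bij_betw_def)
    then show ?thesis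
      using aut that unfolding graph_aut_def by (metis f_inv_into_f inv_into_into)
  qed
  ultimately show ?thesis by (simp add: graph_aut_def)
qed

lemma vertex_transitiveI_from_base:
  assumes "x\<^sub>0 \<in> V" and reach: "\<And>u. u \<in> V \<Longrightarrow> \<exists>\<sigma>. graph_aut V adj \<sigma> \<and> \<sigma> x\<^sub>0 = u"
  shows "vertex_transitive V adj"
  unfolding vertex_transitive_def
proof (intro ballI)
  fix u v assume "u \<in> V" "v \<in> V"
  obtain \<sigma> \<tau> where \<sigma>: "graph_aut V adj \<sigma>" "\<sigma> x\<^sub>0 = u" and \<tau>: "graph_aut V adj \<tau>" "\<tau> x\<^sub>0 = v"
    using reach \<open>u \<in> V\<close> \<open>v \<in> V\<close> by blast
  let ?\<sigma>' = "\<lambda>x. if x \<in> V then inv_into V \<sigma> x else x"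
  have "?\<sigma>' u = x\<^sub>0"
    using \<sigma> \<open>u \<in> V\<close> \<open>x\<^sub>0 \<in> V\<close> by (auto simp: graph_aut_def bij_betw_def)
  then show "\<exists>\<rho>. graph_aut V adj \<rho> \<and> \<rho> u = v"
    using graph_aut_comp[OF \<tau>(1) graph_aut_inv[OF \<sigma>(1)]] \<tau>(2) by (intro exI[of _ "\<tau> \<circ> ?\<sigma>'"]) simp
qed

definition line_graph_map :: "'a set \<Rightarrow> ('a \<Rightarrow> 'a \<Rightarrow> bool) \<Rightarrow> ('a \<Rightarrow> 'a) \<Rightarrow> 'a set \<Rightarrow> 'a set" where
  "line_graph_map V adj \<sigma> e = (if e \<in> graph_edges V adj then \<sigma> ` e else e)"

lemma graph_aut_line_graph_map:
  assumes aut: "graph_aut V adj \<sigma>"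
  shows "graph_aut (graph_edges V adj) (line_graph_adj V adj) (line_graph_map V adj \<sigma>)"
proof -
  let ?E = "graph_edges V adj"
  have bij: "bij_betw \<sigma> V V" and adj: "\<And>u v. u \<in> V \<Longrightarrow> v \<in> V \<Longrightarrow> adj (\<sigma> u) (\<sigma> v) \<longleftrightarrow> adj u v"
    using aut by (auto simp: graph_aut_def)
  have inj: "inj_on (image \<sigma>) ?E"
    using bij by (intro inj_on_image) (auto simp: graph_edges_def bij_betw_def intro: inj_on_subset)
  have "image \<sigma> ` ?E = ?E"
  proof (intro equalityI subsetI)
    fix e assume "e \<in> image \<sigma> ` ?E"
    then obtain u v where "e = {\<sigma> u, \<sigma> v}" "u \<in> V" "v \<in> V" "adj u v"
      by (auto simp: graph_edges_def)
    moreover have "\<sigma> u \<in> V" "\<sigma> v \<in> V"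
      using bij \<open>u \<in> V\<close> \<open>v \<in> V\<close> by (auto dest: bij_betwE)
    ultimately show "e \<in> ?E"
      using adj by (auto simp: graph_edges_def)
  next
    fix e assume "e \<in> ?E"
    then obtain u v where e: "e = {u, v}" "u \<in> V" "v \<in> V" "adj u v"
      by (auto simp: graph_edges_def)
    then obtain u' v' where "u' \<in> V" "v' \<in> V" "u = \<sigma> u'" "v = \<sigma> v'"
      using bij by (metis bij_betw_def imageE)
    with e adj have "{u', v'} \<in> ?E" "e = \<sigma> ` {u', v'}"
      by (auto simp: graph_edges_def)
    then show "e \<in> image \<sigma> ` ?E" by blast
  qed
  with inj have "bij_betw (image \<sigma>) ?E ?E" by (rule bij_betw_imageI)
  then have "bij_betw (line_graph_map V adj \<sigma>) ?E ?E"
    by (rule bij_betw_cong[THEN iffD1, rotated]) (simp add: line_graph_map_def)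
  moreover have "\<sigma> ` e \<inter> \<sigma> ` f = \<sigma> ` (e \<inter> f)" if "e \<in> ?E" "f \<in> ?E" for e f
    using bij that by (intro inj_on_image_Int[symmetric]) (auto simp: bij_betw_def graph_edges_def)
  ultimately show ?thesis
    using inj by (auto simp: graph_aut_def line_graph_adj_def line_graph_map_def bij_betw_def dest: inj_onD)
qed

lemma sum_card_image_Int_if_uniform:
  assumes "finite S" and inj: "\<And>\<sigma>. \<sigma> \<in> S \<Longrightarrow> inj_on \<sigma> V"
    and uniform: "\<And>u v. u \<in> V \<Longrightarrow> v \<in> V \<Longrightarrow> (\<Sum>\<sigma>\<in>S. if \<sigma> u = v then 1 else 0) = (1::nat)"
    and "P \<subseteq> V" "Q \<subseteq> V" "finite P" "finite Q"
  shows "(\<Sum>\<sigma>\<in>S. card (\<sigma> ` P \<inter> Q)) = card P * card Q"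
proof -
  have card_eq: "card (\<sigma> ` P \<inter> Q) = (\<Sum>p\<in>P. \<Sum>q\<in>Q. if \<sigma> p = q then 1 else 0)" if "\<sigma> \<in> S" for \<sigma>
  proof -
    have "\<sigma> ` P \<inter> Q = \<sigma> ` {p \<in> P. \<sigma> p \<in> Q}" by blast
    moreover have "inj_on \<sigma> {p \<in> P. \<sigma> p \<in> Q}"
      using inj[OF that] \<open>P \<subseteq> V\<close> by (blast intro: inj_on_subset)
    ultimately have "card (\<sigma> ` P \<inter> Q) = card {p \<in> P. \<sigma> p \<in> Q}"
      by (simp add: card_image)
    also have "\<dots> = (\<Sum>p\<in>P. if \<sigma> p \<in> Q then 1 else 0)"
      unfolding card_eq_sum sum.inter_filter[OF \<open>finite P\<close>] ..
    finally show ?thesis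
      using \<open>finite Q\<close> by simp
  qed
  have "(\<Sum>\<sigma>\<in>S. card (\<sigma> ` P \<inter> Q)) = (\<Sum>\<sigma>\<in>S. \<Sum>p\<in>P. \<Sum>q\<in>Q. if \<sigma> p = q then 1 else 0)"
    using card_eq by simp
  also have "\<dots> = (\<Sum>p\<in>P. \<Sum>q\<in>Q. \<Sum>\<sigma>\<in>S. if \<sigma> p = q then 1 else 0)"
    by (subst sum.swap) (simp add: sum.swap[of _ S])
  also have "\<dots> = (\<Sum>p\<in>P. \<Sum>q\<in>Q. 1)"
    using uniform \<open>P \<subseteq> V\<close> \<open>Q \<subseteq> V\<close> by (intro sum.cong) auto
  finally show ?thesis by simp
qed

lemma sum_comp_eq_sum_fibres:
  fixes w :: "'b \<Rightarrow> 'c::comm_semiring_1"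
  assumes "finite S" "finite C" "d ` S \<subseteq> C"
  shows "(\<Sum>x\<in>S. w (d x)) = (\<Sum>c\<in>C. w c * of_nat (card {x \<in> S. d x = c}))"
proof -
  have "(\<Sum>x | x \<in> S \<and> d x = c. w (d x)) = w c * of_nat (card {x \<in> S. d x = c})" for c
    by (simp add: mult.commute)
  then have "(\<Sum>c\<in>C. w c * of_nat (card {x \<in> S. d x = c})) = (\<Sum>c\<in>C. \<Sum>x | x \<in> S \<and> d x = c. w (d x))"
    by simp
  also have "\<dots> = (\<Sum>x\<in>S. w (d x))"
    using assms by (rule sum.group)
  finally show ?thesis ..
qed

section \<open>Kneser graphs\<close>

definition kneser_vertices :: "'a set \<Rightarrow> nat \<Rightarrow> 'a set set" where
  "kneser_vertices X k = {A. A \<subseteq> X \<and> card A = k}"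

definition kneser_adj :: "'a set \<Rightarrow> nat \<Rightarrow> 'a set \<Rightarrow> 'a set \<Rightarrow> bool" where
  "kneser_adj X k A B \<longleftrightarrow> A \<in> kneser_vertices X k \<and> B \<in> kneser_vertices X k \<and> A \<inter> B = {}"

definition kneser_map :: "'a set \<Rightarrow> nat \<Rightarrow> ('a \<Rightarrow> 'a) \<Rightarrow> 'a set \<Rightarrow> 'a set" where
  "kneser_map X k \<pi> A = (if A \<in> kneser_vertices X k then \<pi> ` A else A)"

lemma graph_aut_kneser_map:
  assumes bij: "bij_betw \<pi> X X"
  shows "graph_aut (kneser_vertices X k) (kneser_adj X k) (kneser_map X k \<pi>)"
proof -
  let ?K = "kneser_vertices X k"
  have inj: "inj_on \<pi> X" using bij by (simp add: bij_betw_def)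
  have inj_img: "inj_on (image \<pi>) ?K"
    using inj by (intro inj_on_image) (auto simp: kneser_vertices_def intro: inj_on_subset)
  have "image \<pi> ` ?K = ?K"
  proof (intro equalityI subsetI)
    fix B assume "B \<in> image \<pi> ` ?K"
    then obtain A where "B = \<pi> ` A" "A \<subseteq> X" "card A = k" by (auto simp: kneser_vertices_def)
    then show "B \<in> ?K"
      using bij card_image[OF inj_on_subset[OF inj]] by (auto simp: kneser_vertices_def bij_betw_def)
  next
    fix A assume A: "A \<in> ?K"
    let ?B = "inv_into X \<pi> ` A"
    have "bij_betw (inv_into X \<pi>) X X" using bij by (rule bij_betw_inv_into)
    with A have "?B \<in> ?K"
      using card_image[of "inv_into X \<pi>" A] by (auto simp: kneser_vertices_def bij_betw_def intro: inj_on_subset)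
    moreover have "A = \<pi> ` ?B"
      using A bij by (simp add: kneser_vertices_def bij_betw_def image_inv_into_cancel)
    ultimately show "A \<in> image \<pi> ` ?K" by blast
  qed
  with inj_img have "bij_betw (image \<pi>) ?K ?K" by (rule bij_betw_imageI)
  then have "bij_betw (kneser_map X k \<pi>) ?K ?K"
    by (rule bij_betw_cong[THEN iffD1, rotated]) (simp add: kneser_map_def)
  moreover have "\<pi> ` A \<inter> \<pi> ` B = \<pi> ` (A \<inter> B)" if "A \<in> ?K" "B \<in> ?K" for A B
    using inj that by (intro inj_on_image_Int[symmetric]) (auto simp: kneser_vertices_def)
  ultimately show ?thesis
    using \<open>bij_betw (image \<pi>) ?K ?K\<close>
    by (auto simp: graph_aut_def kneser_adj_def kneser_map_def bij_betw_def)
qed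

section \<open>The line graph of the Petersen graph\<close>

lemma petersen_vertices_kneser: "petersen_vertices = kneser_vertices {1..5} 2"
  by (simp add: petersen_vertices_def kneser_vertices_def)

lemma petersen_adj_kneser: "petersen_adj = kneser_adj {1..5} 2"
  by (simp add: fun_eq_iff petersen_adj_def kneser_adj_def petersen_vertices_kneser)

lemma petersen_line_vertices_iff:
  "e \<in> petersen_line_vertices \<longleftrightarrow>
     (\<exists>A B. e = {A, B} \<and> A \<in> petersen_vertices \<and> B \<in> petersen_vertices \<and> A \<inter> B = {})"
  unfolding petersen_line_vertices_def graph_edges_def petersen_adj_def by blast

lemma petersen_line_adj_iff:
  "petersen_line_adj e f \<longleftrightarrow>
     e \<in> petersen_line_vertices \<and> f \<in> petersen_line_vertices \<and> e \<noteq> f \<and> e \<inter> f \<noteq> {}"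
  by (simp add: petersen_line_adj_def line_graph_adj_def petersen_line_vertices_def)

lemma petersen_vertices_eq:
  "petersen_vertices = {{1,2},{1,3},{1,4},{1,5},{2,3},{2,4},{2,5},{3,4},{3,5},{4,5}}"
  (is "_ = ?P")
proof (intro set_eqI iffI)
  fix A :: "nat set"
  assume A: "A \<in> petersen_vertices"
  then obtain x y where xy: "A = {x, y}" "x \<noteq> y"
    by (auto simp: petersen_vertices_def card_2_iff)
  with A have "x \<in> {1, 2, 3, 4, 5}" "y \<in> {1, 2, 3, 4, 5}"
    by (auto simp: petersen_vertices_def)
  with xy show "A \<in> ?P"
    by (elim insertE emptyE; simp add: doubleton_eq_iff)
next
  fix A :: "nat set"
  assume "A \<in> ?P"
  then show "A \<in> petersen_vertices"
    by (auto simp: petersen_vertices_def)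
qed

lemma petersen_line_vertexI:
  "A \<in> petersen_vertices \<Longrightarrow> B \<in> petersen_vertices \<Longrightarrow> A \<inter> B = {} \<Longrightarrow> {A, B} \<in> petersen_line_vertices"
  unfolding petersen_line_vertices_iff by blast

lemma petersen_line_vertices_eq:
  "petersen_line_vertices =
     {{{1,2},{3,4}},{{1,2},{3,5}},{{1,2},{4,5}},{{1,3},{2,4}},{{1,3},{2,5}},{{1,3},{4,5}},
      {{1,4},{2,3}},{{1,4},{2,5}},{{1,4},{3,5}},{{1,5},{2,3}},{{1,5},{2,4}},{{1,5},{3,4}},
      {{2,3},{4,5}},{{2,4},{3,5}},{{2,5},{3,4}}}"
  (is "_ = ?E")
proof (rule subset_antisym; rule subsetI)
  fix e assume "e \<in> petersen_line_vertices"
  then obtain A B where e: "e = {A, B}" and AB: "A \<in> petersen_vertices" "B \<in> petersen_vertices" "A \<inter> B = {}"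
    unfolding petersen_line_vertices_iff by blast
  from AB[unfolded petersen_vertices_eq] show "e \<in> ?E"
    unfolding e by (elim insertE emptyE; simp add: doubleton_eq_iff)
next
  have "\<forall>e\<in>?E. e \<in> petersen_line_vertices"
    unfolding ball_simps
    by (intro conjI TrueI; rule petersen_line_vertexI; simp add: petersen_vertices_eq)
  then show "e \<in> petersen_line_vertices" if "e \<in> ?E" for e
    using that by (rule bspec)
qed

lemma finite_petersen_vertices: "finite petersen_vertices"
  by (simp add: petersen_vertices_eq)

lemma finite_petersen_line_vertices: "finite petersen_line_vertices"
  by (simp add: petersen_line_vertices_eq)

lemma petersen_edge_from_base:
  assumes "e \<in> petersen_line_vertices"
  obtains \<pi> :: "nat \<Rightarrow> nat" where "bij_betw \<pi> {1..5} {1..5}" "image (image \<pi>) {{1, 2}, {3, 4}} = e"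
proof -
  obtain A B where e: "e = {A, B}" "A \<in> petersen_vertices" "B \<in> petersen_vertices" "A \<inter> B = {}"
    using assms unfolding petersen_line_vertices_iff by blast
  have card: "card A = 2" "card B = 2" and sub: "A \<subseteq> {1..5}" "B \<subseteq> {1..5}"
    using e(2,3) by (simp_all add: petersen_vertices_def)
  obtain a\<^sub>1 a\<^sub>2 where A: "A = {a\<^sub>1, a\<^sub>2}" "a\<^sub>1 \<noteq> a\<^sub>2"
    using card(1) card_2_iff by metis
  obtain b\<^sub>1 b\<^sub>2 where B: "B = {b\<^sub>1, b\<^sub>2}" "b\<^sub>1 \<noteq> b\<^sub>2"
    using card(2) card_2_iff by metis
  have "card (A \<union> B) = 4"
    using card_Un_disjoint[of A B] A B e(4) card by simp
  then have "card ({1..5} - (A \<union> B)) = 1"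
    using sub by (simp add: card_Diff_subset finite_subset)
  then obtain c where c: "c \<in> {1..5}" "c \<notin> A \<union> B"
    by (metis card_1_singletonE Diff_iff insertI1)
  define \<pi> where "\<pi> x = (if x = 1 then a\<^sub>1 else if x = 2 then a\<^sub>2 else if x = 3 then b\<^sub>1
      else if x = 4 then b\<^sub>2 else if x = 5 then c else x)" for x :: nat
  have five: "{1..5::nat} = {1, 2, 3, 4, 5}" by auto
  have "inj_on \<pi> {1..5}"
    using A B e(4) c(2) unfolding five inj_on_def by (auto simp: \<pi>_def)
  moreover have "\<pi> ` {1..5} \<subseteq> {1..5}"
    using A B sub c(1) unfolding five by (auto simp: \<pi>_def)
  ultimately have "bij_betw \<pi> {1..5} {1..5}"
    by (simp add: bij_betw_def endo_inj_surj)
  moreover have "image (image \<pi>) {{1, 2}, {3, 4}} = e"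
    using A B e(1) by (simp add: \<pi>_def insert_commute)
  ultimately show thesis by (rule that)
qed

lemma petersen_line_graph_vertex_transitive:
  "vertex_transitive petersen_line_vertices petersen_line_adj"
proof (rule vertex_transitiveI_from_base)
  have base: "{1, 2} \<in> petersen_vertices" "{3, 4} \<in> petersen_vertices" "{1, 2} \<inter> {3, 4::nat} = {}"
    by (auto simp: petersen_vertices_def)
  then show "{{1, 2}, {3, 4}} \<in> petersen_line_vertices"
    unfolding petersen_line_vertices_iff by blast
  fix e assume "e \<in> petersen_line_vertices"
  then obtain \<pi> :: "nat \<Rightarrow> nat" where \<pi>: "bij_betw \<pi> {1..5} {1..5}" "image (image \<pi>) {{1, 2}, {3, 4}} = e"
    by (rule petersen_edge_from_base)
  let ?\<sigma> = "line_graph_map petersen_vertices petersen_adj (kneser_map {1..5} 2 \<pi>)"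
  have "graph_aut petersen_line_vertices petersen_line_adj ?\<sigma>"
    unfolding petersen_line_vertices_def petersen_line_adj_def petersen_adj_kneser petersen_vertices_kneser
    by (intro graph_aut_line_graph_map graph_aut_kneser_map \<pi>(1))
  moreover have "kneser_map {1..5} 2 \<pi> A = \<pi> ` A" if "A \<in> petersen_vertices" for A
    using that by (simp add: kneser_map_def petersen_vertices_kneser)
  then have "?\<sigma> {{1, 2}, {3, 4}} = e"
    using base \<open>{{1, 2}, {3, 4}} \<in> petersen_line_vertices\<close> \<pi>(2)
    by (simp add: line_graph_map_def flip: petersen_line_vertices_def)
  ultimately show "\<exists>\<sigma>. graph_aut petersen_line_vertices petersen_line_adj \<sigma> \<and> \<sigma> {{1, 2}, {3, 4}} = e"
    by blast
qed

section \<open>Stars and non-uniformity\<close>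

definition petersen_star :: "nat set \<Rightarrow> nat set set set" where
  "petersen_star c = {e \<in> petersen_line_vertices. c \<in> e}"

lemma petersen_line_vertex_other_end:
  assumes "e \<in> petersen_line_vertices" "c \<in> e"
  obtains p where "e = {c, p}" "c \<in> petersen_vertices" "p \<in> petersen_vertices" "c \<inter> p = {}"
proof -
  obtain A B where e: "e = {A, B}" "A \<in> petersen_vertices" "B \<in> petersen_vertices" "A \<inter> B = {}"
    using assms(1) unfolding petersen_line_vertices_iff by blast
  then have "c = A \<or> c = B" using assms(2) by blast
  then show thesis
    using e that by (metis Int_commute insert_commute)
qed

lemma petersen_star_subset: "petersen_star c \<subseteq> petersen_line_vertices"
  by (auto simp: petersen_star_def)

lemma finite_petersen_star: "finite (petersen_star c)"
  by (rule finite_subset[OF petersen_star_subset finite_petersen_line_vertices])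

lemma card_petersen_star:
  assumes "c \<in> petersen_vertices"
  shows "card (petersen_star c) = 3"
proof -
  have "card (petersen_star c) = (\<Sum>e\<in>petersen_line_vertices. if c \<in> e then 1 else 0)"
    unfolding petersen_star_def card_eq_sum sum.inter_filter[OF finite_petersen_line_vertices] ..
  moreover have "\<forall>c\<in>petersen_vertices. (\<Sum>e\<in>petersen_line_vertices. if c \<in> e then 1 else 0) = (3::nat)"
    unfolding petersen_vertices_eq petersen_line_vertices_eq by (simp add: doubleton_eq_iff)
  ultimately show ?thesis
    using assms by simp
qed

lemma petersen_star_Int:
  assumes c: "c \<in> petersen_vertices" and b: "b \<in> petersen_vertices" and "c \<noteq> b"
  shows "petersen_star c \<inter> petersen_star b = (if c \<inter> b = {} then {{c, b}} else {})"
proof (intro set_eqI iffI)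
  fix e assume "e \<in> petersen_star c \<inter> petersen_star b"
  then have e: "e \<in> petersen_line_vertices" "c \<in> e" "b \<in> e" by (auto simp: petersen_star_def)
  then obtain p where "e = {c, p}" "c \<inter> p = {}"
    by (metis petersen_line_vertex_other_end)
  with e(3) \<open>c \<noteq> b\<close> show "e \<in> (if c \<inter> b = {} then {{c, b}} else {})" by auto
next
  fix e assume "e \<in> (if c \<inter> b = {} then {{c, b}} else {})"
  then have "c \<inter> b = {}" "e = {c, b}" by (auto split: if_splits)
  then show "e \<in> petersen_star c \<inter> petersen_star b"
    using petersen_line_vertexI[OF c b] by (auto simp: petersen_star_def)
qed

lemma card_petersen_star_Int:
  assumes "c \<in> petersen_vertices" "b \<in> petersen_vertices"
  shows "card (petersen_star c \<inter> petersen_star b) = (if c = b then 3 else if c \<inter> b = {} then 1 else 0)"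
  using assms card_petersen_star petersen_star_Int by (cases "c = b") auto

lemma petersen_no_three_disjoint:
  assumes "A \<in> petersen_vertices" "B \<in> petersen_vertices" "C \<in> petersen_vertices"
    and "A \<inter> B = {}" "A \<inter> C = {}" "B \<inter> C = {}"
  shows False
proof -
  have card: "card A = 2" "card B = 2" "card C = 2" and sub: "A \<union> B \<union> C \<subseteq> {1..5}"
    using assms(1-3) by (auto simp: petersen_vertices_def)
  then have "finite A" "finite B" "finite C" by (simp_all add: card_ge_0_finite)
  then have "card (A \<union> B \<union> C) = 6"
    using assms(4-6) card by (simp add: card_Un_disjoint Int_Un_distrib2)
  moreover have "card (A \<union> B \<union> C) \<le> 5"
    using card_mono[OF _ sub] by simp
  ultimately show False by simp
qed

lemma petersen_line_triangle_is_star: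
  assumes "petersen_line_adj x y" "petersen_line_adj y z" "petersen_line_adj x z"
  shows "\<exists>c\<in>petersen_vertices. {x, y, z} = petersen_star c"
proof -
  note adj = assms[unfolded petersen_line_adj_iff]
  have LV: "x \<in> petersen_line_vertices" "y \<in> petersen_line_vertices" "z \<in> petersen_line_vertices"
    using adj by simp_all
  obtain c where "c \<in> x" "c \<in> y" using adj(1) by blast
  obtain p where x: "x = {c, p}" "c \<in> petersen_vertices" "p \<in> petersen_vertices" "c \<inter> p = {}"
    using LV(1) \<open>c \<in> x\<close> by (rule petersen_line_vertex_other_end)
  obtain q where y: "y = {c, q}" "q \<in> petersen_vertices" "c \<inter> q = {}"
    using LV(2) \<open>c \<in> y\<close> by (rule petersen_line_vertex_other_end)
  have "c \<in> z"
  proof (rule ccontr)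
    assume "c \<notin> z"
    then have "p \<in> z" "q \<in> z"
      using x(1) y(1) adj(2,3) by blast+
    obtain r where "z = {p, r}" "p \<inter> r = {}"
      using LV(3) \<open>p \<in> z\<close> by (rule petersen_line_vertex_other_end)
    moreover have "p \<noteq> q"
      using x(1) y(1) adj(1) by blast
    ultimately have "p \<inter> q = {}"
      using \<open>q \<in> z\<close> by blast
    then show False
      using petersen_no_three_disjoint[OF x(2,3) y(2) x(4) y(3)] by blast
  qed
  then have "{x, y, z} \<subseteq> petersen_star c"
    using LV \<open>c \<in> x\<close> \<open>c \<in> y\<close> by (simp add: petersen_star_def)
  moreover have "card {x, y, z} = 3"
    using adj by simp
  ultimately show ?thesis
    using card_subset_eq[OF finite_petersen_star] card_petersen_star[OF x(2)] x(2) by metis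
qed

lemma graph_aut_image_petersen_star:
  assumes aut: "graph_aut petersen_line_vertices petersen_line_adj \<sigma>" and c: "c \<in> petersen_vertices"
  obtains d where "d \<in> petersen_vertices" "\<sigma> ` petersen_star c = petersen_star d"
proof -
  obtain x y z where xyz: "petersen_star c = {x, y, z}" "x \<noteq> y" "y \<noteq> z" "x \<noteq> z"
    using card_petersen_star[OF c] card_3_iff by metis
  have "petersen_line_adj e f" if "e \<in> petersen_star c" "f \<in> petersen_star c" "e \<noteq> f" for e f
    using that by (auto simp: petersen_star_def petersen_line_adj_iff)
  then have "petersen_line_adj (\<sigma> e) (\<sigma> f)" if "e \<in> petersen_star c" "f \<in> petersen_star c" "e \<noteq> f" for e f
    using aut that by (simp add: graph_aut_def petersen_star_def)
  then have "\<exists>d\<in>petersen_vertices. {\<sigma> x, \<sigma> y, \<sigma> z} = petersen_star d"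
    using xyz by (intro petersen_line_triangle_is_star) auto
  then show thesis
    using xyz(1) that by auto
qed

text \<open>The system is (3I + A) X = 9 for the adjacency matrix A of the Petersen graph. As A has
  eigenvalues 3, 1 and -2, the matrix 3I + A is invertible and X = 3/2 is the only solution.\<close>

lemma petersen_star_system_unsolvable:
  assumes "\<And>b. b \<in> petersen_vertices \<Longrightarrow>
    (\<Sum>c\<in>petersen_vertices. (if c = b then 3 else if c \<inter> b = {} then 1 else 0) * X c) = (9::nat)"
  shows False
proof -
  have "\<forall>b\<in>petersen_vertices.
    (\<Sum>c\<in>petersen_vertices. (if c = b then 3 else if c \<inter> b = {} then 1 else 0) * X c) = 9"
    using assms by blast
  then have "2 * X {1, 2} = 3"
    unfolding petersen_vertices_eq by (simp add: doubleton_eq_iff)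
  then show False by presburger
qed

lemma petersen_line_graph_not_uniformly_vertex_transitive:
  "\<not> uniformly_vertex_transitive petersen_line_vertices petersen_line_adj"
proof
  assume "uniformly_vertex_transitive petersen_line_vertices petersen_line_adj"
  then obtain S where "finite S" and aut: "\<And>\<sigma>. \<sigma> \<in> S \<Longrightarrow> graph_aut petersen_line_vertices petersen_line_adj \<sigma>"
    and uniform: "\<And>u v. u \<in> petersen_line_vertices \<Longrightarrow> v \<in> petersen_line_vertices \<Longrightarrow>
                   (\<Sum>\<sigma>\<in>S. if \<sigma> u = v then 1 else 0) = (1::nat)"
    unfolding uniformly_vertex_transitive_def by blast
  have inj: "\<And>\<sigma>. \<sigma> \<in> S \<Longrightarrow> inj_on \<sigma> petersen_line_vertices"
    using aut by (simp add: graph_aut_def bij_betw_def)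
  define a :: "nat set" where "a = {1, 2}"
  have a: "a \<in> petersen_vertices" by (simp add: a_def petersen_vertices_eq)
  have "\<forall>\<sigma>\<in>S. \<exists>d. d \<in> petersen_vertices \<and> \<sigma> ` petersen_star a = petersen_star d"
    using graph_aut_image_petersen_star[OF aut a] by metis
  then obtain d where d: "\<And>\<sigma>. \<sigma> \<in> S \<Longrightarrow> d \<sigma> \<in> petersen_vertices \<and> \<sigma> ` petersen_star a = petersen_star (d \<sigma>)"
    by metis
  define X where "X c = card {\<sigma> \<in> S. d \<sigma> = c}" for c
  have "(\<Sum>c\<in>petersen_vertices. (if c = b then 3 else if c \<inter> b = {} then 1 else 0) * X c) = 9"
    if b: "b \<in> petersen_vertices" for b
  proof -
    have "(\<Sum>c\<in>petersen_vertices. (if c = b then 3 else if c \<inter> b = {} then 1 else 0) * X c) =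
        (\<Sum>\<sigma>\<in>S. if d \<sigma> = b then 3 else if d \<sigma> \<inter> b = {} then 1 else 0)"
      unfolding X_def using d \<open>finite S\<close> finite_petersen_vertices
      by (subst sum_comp_eq_sum_fibres[where d = d]) auto
    also have "\<dots> = (\<Sum>\<sigma>\<in>S. card (\<sigma> ` petersen_star a \<inter> petersen_star b))"
      using d b by (intro sum.cong) (simp_all add: card_petersen_star_Int)
    also have "\<dots> = card (petersen_star a) * card (petersen_star b)"
      using \<open>finite S\<close> inj uniform petersen_star_subset petersen_star_subset finite_petersen_star finite_petersen_star
      by (rule sum_card_image_Int_if_uniform)
    also have "\<dots> = 9"
      using a b by (simp add: card_petersen_star)
    finally show ?thesis .
  qed
  then show False
    by (rule petersen_star_system_unsolvable)
qed

theorem mainTheorem8: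
  shows "vertex_transitive petersen_line_vertices petersen_line_adj \<and>
         \<not> uniformly_vertex_transitive petersen_line_vertices petersen_line_adj"
  using petersen_line_graph_vertex_transitive petersen_line_graph_not_uniformly_vertex_transitive
  by blast

end
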